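(* If $w$ is an infinite word over a finite alphabet $A$ and $H$ is a graph on $A$ with loops allowed, then the class $\mathcal{P}(w,H)$ is above the Bell number.
   Context: Words over $A$ are maps $w:S\to A$ with $S=\{1,\dots,n\}$ or $\mathbb{N}$, $w_i=w(i)$. For positive integers $u_1<\dots<u_m$, $G_{w,H}(u_1,\dots,u_m)$ is the graph on $\{u_1,\dots,u_m\}$ in which $u_iu_j$ is an edge iff ($|u_i-u_j|=1$ and $w_{u_i}w_{u_j}\notin E(H)$) or ($|u_i-u_j|>1$ and $w_{u_i}w_{u_j}\in E(H)$) (for equal letters $a$ this refers to a loop at $a$). $\mathcal{P}(w,H)$ is the hereditary class of all graphs isomorphic to some $G_{w,H}(u_1,\dots,u_m)$. A hereditary class is above the Bell number if the number of its graphs on vertex set $\{1,\dots,n\}$ is at least $n^{(1-o(1))n}$ (equivalently, at least the Bell number $B_n$). *)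

theory Defs
  imports Complex_Main
begin

text \<open>A word is a map from positions to letters; for an infinite word we use
  w :: nat => 'a and only positions >= 1 are ever used.
  A graph H on the alphabet A with loops allowed is a symmetric relation E on A
  (E a a means a loop at a).\<close>

definition adjacent_pos :: "nat \<Rightarrow> nat \<Rightarrow> bool" where
  "adjacent_pos u v \<longleftrightarrow> u = v + 1 \<or> v = u + 1"

definition GwH_edges :: "(nat \<Rightarrow> 'a) \<Rightarrow> ('a \<Rightarrow> 'a \<Rightarrow> bool) \<Rightarrow> nat set \<Rightarrow> nat set set" where
  "GwH_edges w E U = {{u, v} | u v. u \<in> U \<and> v \<in> U \<and> u \<noteq> v \<and>
      ((adjacent_pos u v \<and> \<not> E (w u) (w v)) \<or> (\<not> adjacent_pos u v \<and> E (w u) (w v)))}"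

definition graphs_on :: "'v set \<Rightarrow> 'v set set set" where
  "graphs_on V = {G. G \<subseteq> {{i, j} | i j. i \<in> V \<and> j \<in> V \<and> i \<noteq> j}}"

definition graph_iso :: "'v set \<Rightarrow> 'v set set \<Rightarrow> 'u set \<Rightarrow> 'u set set \<Rightarrow> bool" where
  "graph_iso V G U F \<longleftrightarrow> (\<exists>f. bij_betw f V U \<and>
      (\<forall>i\<in>V. \<forall>j\<in>V. i \<noteq> j \<longrightarrow> ({i, j} \<in> G \<longleftrightarrow> {f i, f j} \<in> F)))"

definition in_P :: "(nat \<Rightarrow> 'a) \<Rightarrow> ('a \<Rightarrow> 'a \<Rightarrow> bool) \<Rightarrow> 'v set \<Rightarrow> 'v set set \<Rightarrow> bool" where
  "in_P w E V G \<longleftrightarrow> (\<exists>U. finite U \<and> 0 \<notin> U \<and> graph_iso V G U (GwH_edges w E U))"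

definition speed_P :: "(nat \<Rightarrow> 'a) \<Rightarrow> ('a \<Rightarrow> 'a \<Rightarrow> bool) \<Rightarrow> nat \<Rightarrow> nat" where
  "speed_P w E n = card {G \<in> graphs_on {1..n}. in_P w E {1..n} G}"

definition above_Bell :: "(nat \<Rightarrow> nat) \<Rightarrow> bool" where
  "above_Bell s \<longleftrightarrow> (\<forall>\<epsilon>>0. \<forall>\<^sub>F n in sequentially.
      real (s n) \<ge> real n powr ((1 - \<epsilon>) * real n))"

end

theory Submission
  imports Defs "HOL-Combinatorics.Permutations"
begin

text \<open>A permutation \<open>s\<close> of \<open>{1..n}\<close> can be recovered from three pieces of data: the graph on
  \<open>{1..n}\<close> obtained by pulling back \<open>G\<^sub>w\<^sub>,\<^sub>H({1..n})\<close> along \<open>s\<close> (a member of the class),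
  the letters \<open>w (s i)\<close>, and the position \<open>s\<^sup>-\<^sup>1 1\<close>. Indeed, for distinct \<open>u, v\<close> the pair
  \<open>uv\<close> is an edge of \<open>G\<^sub>w\<^sub>,\<^sub>H\<close> exactly when "\<open>u, v\<close> are consecutive" differs from
  "\<open>w\<^sub>u w\<^sub>v \<in> E(H)\<close>", so the data tell which pairs \<open>i, j\<close> have consecutive images, and a
  permutation is determined by this consecutiveness relation together with the preimage
  of \<open>1\<close>. Hence \<open>n! \<le> speed(n) \<cdot> |A|^n \<cdot> n\<close>, and \<open>n^n \<le> e^n n!\<close> turns this into the
  bound \<open>speed(n) \<ge> n^((1 - \<epsilon>) n)\<close> for large \<open>n\<close>.\<close>

lemma power_div_fact_le_exp:
  assumes "(x::real) \<ge> 0"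
  shows "x ^ n / fact n \<le> exp x"
proof -
  have s: "(\<lambda>k. x ^ k /\<^sub>R fact k) sums exp x" by (rule exp_converges)
  have "sum (\<lambda>k. x ^ k /\<^sub>R fact k) {n} \<le> suminf (\<lambda>k. x ^ k /\<^sub>R fact k)"
    by (rule sum_le_suminf) (use s assms in \<open>auto simp: sums_iff\<close>)
  then show ?thesis using s by (simp add: sums_iff divide_inverse mult.commute)
qed

lemma eventually_exp_mult_power_le_powr:
  fixes c \<epsilon> :: real
  assumes "c > 0" "\<epsilon> > 0"
  shows "\<forall>\<^sub>F n in sequentially. exp (real n) * c ^ n * real n \<le> real n powr (\<epsilon> * real n)"
proof (rule eventually_sequentiallyI)
  define D where "D = 2 + ln c"
  fix n assume n: "nat \<lceil>exp (D / \<epsilon>)\<rceil> + 1 \<le> n"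
  then have npos: "real n > 0" by simp
  have "exp (D / \<epsilon>) \<le> real n" using n by linarith
  then have "D / \<epsilon> \<le> ln (real n)" using npos by (metis exp_le_cancel_iff exp_ln)
  then have D_le: "D \<le> \<epsilon> * ln (real n)" using assms(2) by (simp add: field_simps)
  have "ln (real n) \<le> real n" using ln_le_minus_one[OF npos] by linarith
  then have "real n + real n * ln c + ln (real n) \<le> real n * D"
    unfolding D_def by (simp add: algebra_simps)
  also have "\<dots> \<le> \<epsilon> * real n * ln (real n)"
    using D_le npos by (simp add: mult.commute mult.left_commute mult_left_mono)
  finally have "exp (real n + real n * ln c + ln (real n)) \<le> exp (\<epsilon> * real n * ln (real n))"
    by simp
  moreover have "c ^ n = exp (real n * ln c)" using assms(1) by (simp add: exp_of_nat_mult)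
  ultimately show "exp (real n) * c ^ n * real n \<le> real n powr (\<epsilon> * real n)"
    using npos by (simp add: exp_add powr_def mult.commute)
qed

lemma above_Bell_if_fact_le:
  fixes s :: "nat \<Rightarrow> nat" and c :: real
  assumes "c > 0" and fact_le: "\<And>n. n \<ge> 1 \<Longrightarrow> fact n \<le> real (s n) * c ^ n * real n"
  shows "above_Bell s"
  unfolding above_Bell_def
proof (intro allI impI)
  fix \<epsilon> :: real assume "\<epsilon> > 0"
  show "\<forall>\<^sub>F n in sequentially. real n powr ((1 - \<epsilon>) * real n) \<le> real (s n)"
    using eventually_exp_mult_power_le_powr[OF \<open>c > 0\<close> \<open>\<epsilon> > 0\<close>] eventually_ge_at_top[of 1]
  proof eventually_elim
    case (elim n)
    have npos: "real n > 0" using elim(2) by simp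
    have "real n ^ n \<le> exp (real n) * fact n"
      using power_div_fact_le_exp[of "real n" n] by (simp add: field_simps)
    also have "\<dots> \<le> exp (real n) * (real (s n) * c ^ n * real n)"
      using fact_le[OF elim(2)] by simp
    also have "\<dots> = real (s n) * (exp (real n) * c ^ n * real n)" by (simp add: algebra_simps)
    also have "\<dots> \<le> real (s n) * real n powr (\<epsilon> * real n)"
      using elim(1) by (simp add: mult_left_mono)
    finally have main: "real n ^ n \<le> real (s n) * real n powr (\<epsilon> * real n)" .
    have "real n powr ((1 - \<epsilon>) * real n) = real n ^ n / real n powr (\<epsilon> * real n)"
      using npos by (simp add: left_diff_distrib powr_diff powr_realpow)
    also have "\<dots> \<le> real (s n)" using main npos by (simp add: divide_le_eq)
    finally show ?case .
  qed
qed

lemma doubleton_in_GwH_edges_iff: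
  assumes sym: "\<forall>a b. E a b \<longrightarrow> E b a" and "u \<in> U" "v \<in> U" "u \<noteq> v"
  shows "{u, v} \<in> GwH_edges w E U \<longleftrightarrow> adjacent_pos u v \<noteq> E (w u) (w v)"
proof -
  have "adjacent_pos v u = adjacent_pos u v" "E (w v) (w u) = E (w u) (w v)"
    using sym by (auto simp: adjacent_pos_def)
  then show ?thesis
    using assms(2-4) unfolding GwH_edges_def by (auto simp: doubleton_eq_iff)
qed

definition pullback_graph :: "('v \<Rightarrow> 'u) \<Rightarrow> 'v set \<Rightarrow> 'u set set \<Rightarrow> 'v set set" where
  "pullback_graph f V G = {{i, j} | i j. i \<in> V \<and> j \<in> V \<and> i \<noteq> j \<and> {f i, f j} \<in> G}"

lemma doubleton_in_pullback_graph_iff: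
  assumes "i \<in> V" "j \<in> V" "i \<noteq> j"
  shows "{i, j} \<in> pullback_graph f V G \<longleftrightarrow> {f i, f j} \<in> G"
  using assms unfolding pullback_graph_def by (auto simp: doubleton_eq_iff insert_commute)

lemma pullback_graph_in_graphs_on: "pullback_graph f V G \<in> graphs_on V"
  unfolding pullback_graph_def graphs_on_def by blast

lemma graph_iso_pullback_graph:
  assumes "bij_betw f V U"
  shows "graph_iso V (pullback_graph f V G) U G"
  unfolding graph_iso_def
proof (intro exI conjI ballI impI)
  fix i j assume "i \<in> V" "j \<in> V" "i \<noteq> j"
  then show "{i, j} \<in> pullback_graph f V G \<longleftrightarrow> {f i, f j} \<in> G"
    by (rule doubleton_in_pullback_graph_iff)
qed (fact assms)

lemma finite_graphs_on:
  assumes "finite V"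
  shows "finite (graphs_on V)"
proof -
  have "{{i, j} | i j. i \<in> V \<and> j \<in> V \<and> i \<noteq> j} \<subseteq> (\<lambda>(i, j). {i, j}) ` (V \<times> V)" by auto
  then have "finite {{i, j} | i j. i \<in> V \<and> j \<in> V \<and> i \<noteq> j}"
    using assms by (blast intro: finite_subset)
  then show ?thesis unfolding graphs_on_def by simp
qed

lemma adjacency_preserving_permutation_eq_id:
  assumes p: "p permutes {1..n}" and p1: "p 1 = 1"
    and adj: "\<And>i j. i \<in> {1..n} \<Longrightarrow> j \<in> {1..n} \<Longrightarrow> adjacent_pos i j \<Longrightarrow> adjacent_pos (p i) (p j)"
  shows "p = id"
proof -
  have fixed: "p m = m" if "1 \<le> m" "m \<le> n" for m
    using that
  proof (induction m rule: less_induct)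
    case (less m)
    show ?case
    proof (cases "m = 1")
      case False
      then have "m \<ge> 2" using less.prems by simp
      have prev: "p (m - 1) = m - 1" using less.IH[of "m - 1"] less.prems \<open>m \<ge> 2\<close> by simp
      have range: "m - 1 \<in> {1..n}" "m \<in> {1..n}" using less.prems \<open>m \<ge> 2\<close> by auto
      have "adjacent_pos (m - 1) m" using less.prems by (simp add: adjacent_pos_def)
      then have "adjacent_pos (m - 1) (p m)" using adj[OF range] prev by simp
      then have "p m = m \<or> p m + 2 = m" using \<open>m \<ge> 2\<close> unfolding adjacent_pos_def by linarith
      moreover have "p m + 2 \<noteq> m"
      proof
        assume two: "p m + 2 = m"
        have "p m \<ge> 1" using permutes_in_image[OF p, of m] range(2) by simp
        then have "p (m - 2) = p m" using less.IH[of "m - 2"] less.prems two by simp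
        with permutes_inj[OF p] have "m - 2 = m" by (rule injD)
        then show False using two by simp
      qed
      ultimately show ?thesis by blast
    qed (use p1 in simp)
  qed
  show ?thesis
  proof
    fix x show "p x = id x"
      using fixed permutes_not_in[OF p] by (cases "x \<in> {1..n}") auto
  qed
qed

text \<open>A permutation is determined by which pairs it maps to consecutive integers, up to the
  reflection \<open>m \<mapsto> n + 1 - m\<close>; the preimage of \<open>1\<close> removes this ambiguity.\<close>
lemma permutation_eq_if_same_adjacency:
  assumes s: "s permutes {1..n}" and t: "t permutes {1..n}"
    and adj: "\<And>i j. i \<in> {1..n} \<Longrightarrow> j \<in> {1..n} \<Longrightarrow> adjacent_pos (s i) (s j) = adjacent_pos (t i) (t j)"
    and one: "inv s 1 = inv t 1"
  shows "s = t"
proof -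
  have "t \<circ> inv s = id"
  proof (rule adjacency_preserving_permutation_eq_id)
    show "t \<circ> inv s permutes {1..n}" using s t by (simp add: permutes_compose permutes_inv)
    show "(t \<circ> inv s) 1 = 1" using one t by (simp add: permutes_inverses(1))
    fix i j assume "i \<in> {1..n}" "j \<in> {1..n}" "adjacent_pos i j"
    moreover have "inv s i \<in> {1..n}" "inv s j \<in> {1..n}"
      using calculation permutes_in_image[OF permutes_inv[OF s]] by auto
    ultimately show "adjacent_pos ((t \<circ> inv s) i) ((t \<circ> inv s) j)"
      using adj[of "inv s i" "inv s j"] s by (simp add: permutes_inverses(1))
  qed
  moreover have "t = (t \<circ> inv s) \<circ> s"
    using inv_o_cancel[OF permutes_inj[OF s]] by (simp add: o_assoc[symmetric])
  ultimately show ?thesis by simp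
qed

definition permutation_code ::
    "(nat \<Rightarrow> 'a) \<Rightarrow> ('a \<Rightarrow> 'a \<Rightarrow> bool) \<Rightarrow> nat \<Rightarrow> (nat \<Rightarrow> nat) \<Rightarrow> nat set set \<times> 'a list \<times> nat" where
  "permutation_code w E n s =
     (pullback_graph s {1..n} (GwH_edges w E {1..n}), map (w \<circ> s) [1..<n+1], inv s 1)"

lemma inj_on_permutation_code:
  assumes sym: "\<forall>a b. E a b \<longrightarrow> E b a"
  shows "inj_on (permutation_code w E n) {s. s permutes {1..n}}"
proof
  fix s t assume "s \<in> {s. s permutes {1..n}}" "t \<in> {s. s permutes {1..n}}"
  then have s: "s permutes {1..n}" and t: "t permutes {1..n}" by auto
  assume "permutation_code w E n s = permutation_code w E n t"
  then have graph: "pullback_graph s {1..n} (GwH_edges w E {1..n})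
                  = pullback_graph t {1..n} (GwH_edges w E {1..n})"
    and letters: "\<And>i. i \<in> {1..n} \<Longrightarrow> w (s i) = w (t i)"
    and one: "inv s 1 = inv t 1"
    unfolding permutation_code_def by auto
  show "s = t"
  proof (rule permutation_eq_if_same_adjacency[OF s t _ one])
    fix i j assume i: "i \<in> {1..n}" and j: "j \<in> {1..n}"
    show "adjacent_pos (s i) (s j) = adjacent_pos (t i) (t j)"
    proof (cases "i = j")
      case False
      let ?G = "GwH_edges w E {1..n}"
      have s_ij: "s i \<in> {1..n}" "s j \<in> {1..n}" "s i \<noteq> s j"
        using i j False permutes_in_image[OF s] permutes_inj[OF s] by (auto dest: injD)
      have t_ij: "t i \<in> {1..n}" "t j \<in> {1..n}" "t i \<noteq> t j"
        using i j False permutes_in_image[OF t] permutes_inj[OF t] by (auto dest: injD)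
      have "{s i, s j} \<in> ?G \<longleftrightarrow> {t i, t j} \<in> ?G"
        using graph doubleton_in_pullback_graph_iff[OF i j False] by metis
      then have "(adjacent_pos (s i) (s j) \<noteq> E (w (s i)) (w (s j)))
               = (adjacent_pos (t i) (t j) \<noteq> E (w (t i)) (w (t j)))"
        by (simp only: doubleton_in_GwH_edges_iff[OF sym s_ij] doubleton_in_GwH_edges_iff[OF sym t_ij])
      then show ?thesis using letters[OF i] letters[OF j] by auto
    qed (simp add: adjacent_pos_def)
  qed
qed

lemma permutation_code_mem:
  assumes wA: "\<forall>i\<ge>1. w i \<in> A" and s: "s permutes {1..n}" and n: "n \<ge> 1"
  shows "permutation_code w E n s \<in>
    {G \<in> graphs_on {1..n}. in_P w E {1..n} G} \<times> {xs. set xs \<subseteq> A \<and> length xs = n} \<times> {1..n}"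
proof -
  have "graph_iso {1..n} (pullback_graph s {1..n} (GwH_edges w E {1..n})) {1..n} (GwH_edges w E {1..n})"
    by (rule graph_iso_pullback_graph[OF permutes_imp_bij[OF s]])
  then have "in_P w E {1..n} (pullback_graph s {1..n} (GwH_edges w E {1..n}))"
    unfolding in_P_def by (intro exI[of _ "{1..n}"]) simp
  moreover have "w (s i) \<in> A" if "i \<in> {1..n}" for i
    using wA permutes_in_image[OF s] that by auto
  moreover have "inv s 1 \<in> {1..n}" using n permutes_in_image[OF permutes_inv[OF s]] by simp
  ultimately show ?thesis
    unfolding permutation_code_def by (auto simp: pullback_graph_in_graphs_on)
qed

lemma fact_le_speed_P:
  assumes "finite A" and wA: "\<forall>i\<ge>1. w i \<in> A" and sym: "\<forall>a b. E a b \<longrightarrow> E b a"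
    and n: "n \<ge> 1"
  shows "fact n \<le> speed_P w E n * card A ^ n * n"
proof -
  let ?graphs = "{G \<in> graphs_on {1..n}. in_P w E {1..n} G}"
  let ?words = "{xs. set xs \<subseteq> A \<and> length xs = n}"
  have "fact n = card {s. s permutes {1..n}}" by (simp add: card_permutations)
  also have "\<dots> \<le> card (?graphs \<times> ?words \<times> {1..n})"
  proof (rule card_inj_on_le[OF inj_on_permutation_code[OF sym]])
    show "permutation_code w E n ` {s. s permutes {1..n}} \<subseteq> ?graphs \<times> ?words \<times> {1..n}"
      using permutation_code_mem[OF wA _ n] by blast
    show "finite (?graphs \<times> ?words \<times> {1..n})"
      using \<open>finite A\<close> finite_graphs_on[of "{1..n}"] by (simp add: finite_lists_length_eq)
  qed
  also have "\<dots> = speed_P w E n * card A ^ n * n"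
    using \<open>finite A\<close> by (simp add: card_cartesian_product card_lists_length_eq speed_P_def)
  finally show ?thesis .
qed

theorem proposition3p7:
  fixes w :: "nat \<Rightarrow> 'a" and A :: "'a set" and E :: "'a \<Rightarrow> 'a \<Rightarrow> bool"
  assumes "finite A"
    and "\<forall>i\<ge>1. w i \<in> A"
    and "\<forall>a b. E a b \<longrightarrow> a \<in> A \<and> b \<in> A"
    and "\<forall>a b. E a b \<longrightarrow> E b a"
  shows "above_Bell (speed_P w E)"
proof (rule above_Bell_if_fact_le)
  have "w 1 \<in> A" using assms(2) by simp
  then show "real (card A) > 0" using assms(1) card_gt_0_iff by fastforce
  fix n :: nat assume "n \<ge> 1"
  then have "fact n \<le> speed_P w E n * card A ^ n * n"
    by (rule fact_le_speed_P[OF assms(1,2,4)])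
  then show "fact n \<le> real (speed_P w E n) * real (card A) ^ n * real n"
    by (metis of_nat_fact of_nat_le_iff of_nat_mult of_nat_power)
qed

end
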